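(* Let $\Gamma\subseteq\mathbb{R}^n$ be a simple rectifiable curve. For $\epsilon>0$ and $p_1,p_2\in\mathbb{R}^n$ let $$L(\Gamma,\epsilon,p_1,p_2)=\inf\{\mathcal{H}^1(\Gamma'):\Gamma'\text{ is a simple rectifiable curve},\ \Gamma'\subseteq\Gamma(\epsilon),\ p_1,p_2\in\Gamma'\}.$$ Then $$\lim_{\epsilon\to0^+}\ \sup_{p_1,p_2\in\Gamma(\epsilon)}L(\Gamma,\epsilon,p_1,p_2)=\mathcal{H}^1(\Gamma).$$
   Context: A curve is the range of a continuous map $f:[a,b]\to\mathbb{R}^n$ with $a<b$; it is simple if it has a one-to-one such parametrization, and rectifiable if it has finite length. $\mathcal{H}^1$ denotes one-dimensional Hausdorff measure on $\mathbb{R}^n$ (which equals length on simple curves). For $A\subseteq\mathbb{R}^n$ and $\epsilon>0$, the Minkowski sausage is $A(\epsilon)=\{p\in\mathbb{R}^n:\inf_{p'\in A}|p-p'|\le\epsilon\}$. *)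

theory Defs
  imports "HOL-Analysis.Analysis"
begin

definition simple_curve :: "'a::euclidean_space set \<Rightarrow> bool" where
  "simple_curve \<Gamma> \<longleftrightarrow> (\<exists>a b (f::real \<Rightarrow> 'a). a < b \<and> continuous_on {a..b} f \<and>
      inj_on f {a..b} \<and> \<Gamma> = f ` {a..b})"

definition param_length :: "real \<Rightarrow> real \<Rightarrow> (real \<Rightarrow> 'a::euclidean_space) \<Rightarrow> ennreal" where
  "param_length a b f = (SUP (n, t) \<in> {(n::nat, t::nat \<Rightarrow> real). t 0 = a \<and> t n = b \<and> (\<forall>i<n. t i \<le> t (Suc i))}.
      (\<Sum>i<n. ennreal (dist (f (t (Suc i))) (f (t i)))))"

definition rectifiable_curve :: "'a::euclidean_space set \<Rightarrow> bool" where
  "rectifiable_curve \<Gamma> \<longleftrightarrow> (\<exists>a b (f::real \<Rightarrow> 'a). a < b \<and> continuous_on {a..b} f \<and>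
      \<Gamma> = f ` {a..b} \<and> param_length a b f < \<infinity>)"

text \<open>One-dimensional Hausdorff measure (normalised so that it equals length on simple curves):
  H^1(A) = sup over delta>0 of inf of sums of diameters of countable delta-covers.\<close>
definition hausdorff_pre1 :: "real \<Rightarrow> 'a::euclidean_space set \<Rightarrow> ennreal" where
  "hausdorff_pre1 \<delta> A = (INF C \<in> {C :: nat \<Rightarrow> 'a set. A \<subseteq> (\<Union>i. C i) \<and>
        (\<forall>i. bounded (C i) \<and> diameter (C i) \<le> \<delta>)}. (\<Sum>i. ennreal (diameter (C i))))"

definition hausdorff1 :: "'a::euclidean_space set \<Rightarrow> ennreal" where
  "hausdorff1 A = (SUP \<delta> \<in> {0<..}. hausdorff_pre1 \<delta> A)"

definition sausage :: "'a::euclidean_space set \<Rightarrow> real \<Rightarrow> 'a set" where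
  "sausage A \<epsilon> = {p. infdist p A \<le> \<epsilon>}"

definition Lfun :: "'a::euclidean_space set \<Rightarrow> real \<Rightarrow> 'a \<Rightarrow> 'a \<Rightarrow> ennreal" where
  "Lfun \<Gamma> \<epsilon> p1 p2 = (INF \<Gamma>' \<in> {\<Gamma>'. simple_curve \<Gamma>' \<and> rectifiable_curve \<Gamma>' \<and>
       \<Gamma>' \<subseteq> sausage \<Gamma> \<epsilon> \<and> p1 \<in> \<Gamma>' \<and> p2 \<in> \<Gamma>'}. hausdorff1 \<Gamma>')"

end

theory Submission
  imports Defs
begin

text \<open>
  For an injective parametrisation \<open>g\<close> of \<open>\<Gamma>\<close>, \<open>H\<^sup>1(\<Gamma>)\<close> is the supremum of the lengths of
  inscribed polygons. Upper bound: two points of the sausage are joined by segments of length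
  at most \<open>\<epsilon>\<close> to their nearest points on \<open>\<Gamma>\<close>, and these by a path in \<open>\<Gamma>\<close>; an arc inside this
  path is admissible and has length at most \<open>H\<^sup>1(\<Gamma>) + 2\<epsilon>\<close>. Lower bound: extend \<open>g\<^sup>-\<^sup>1\<close> to a
  continuous map \<open>G\<close> on the whole space (Tietze). For small \<open>\<epsilon>\<close>, every admissible curve from
  \<open>g a\<close> to \<open>g b\<close> passes, in order, points where \<open>G\<close> takes the parameters of the vertices of a given
  polygon, and these points are close to the vertices; so the curve is almost as long as the polygon.
\<close>

section \<open>One-dimensional Hausdorff measure\<close>

lemma suminf_interleave_ennreal:
  fixes f g :: "nat \<Rightarrow> ennreal"
  shows "(\<Sum>j. if even j then f (j div 2) else g (j div 2)) = (\<Sum>i. f i) + (\<Sum>i. g i)"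
proof -
  let ?F = "\<lambda>j. if even j then f (j div 2) else 0"
  let ?G = "\<lambda>j. if even j then 0 else g (j div 2)"
  have "(\<Sum>i. ?F (2 * i)) = suminf ?F"
    by (rule suminf_mono_reindex) (auto simp: strict_mono_def)
  then have evens: "suminf ?F = (\<Sum>i. f i)" by simp
  have "(\<Sum>i. ?G (2 * i + 1)) = suminf ?G"
    by (rule suminf_mono_reindex) (auto simp: strict_mono_def elim!: oddE)
  then have odds: "suminf ?G = (\<Sum>i. g i)" by simp
  have "(\<Sum>j. if even j then f (j div 2) else g (j div 2))
      = (\<Sum>j. (if even j then f (j div 2) else 0) + (if even j then 0 else g (j div 2)))"
    by (intro suminf_cong) simp
  also have "\<dots> = suminf ?F + suminf ?G"
    by (rule suminf_add[symmetric]) auto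
  also have "\<dots> = (\<Sum>i. f i) + (\<Sum>i. g i)"
    by (simp only: evens odds)
  finally show ?thesis .
qed

lemma hausdorff_pre1_le_cover:
  assumes "A \<subseteq> (\<Union>i. C i)" "\<And>i. bounded (C i)" "\<And>i. diameter (C i) \<le> \<delta>"
  shows "hausdorff_pre1 \<delta> A \<le> (\<Sum>i. ennreal (diameter (C i)))"
  unfolding hausdorff_pre1_def by (rule INF_lower) (use assms in auto)

lemma hausdorff_pre1_approx_cover:
  assumes "hausdorff_pre1 \<delta> A < \<infinity>" "0 < e"
  shows "\<exists>C. A \<subseteq> (\<Union>i. C i) \<and> (\<forall>i. bounded (C i) \<and> diameter (C i) \<le> \<delta>) \<and>
    (\<Sum>i. ennreal (diameter (C i))) < hausdorff_pre1 \<delta> A + ennreal e"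
proof -
  have "hausdorff_pre1 \<delta> A < hausdorff_pre1 \<delta> A + ennreal e"
    using assms by (cases "hausdorff_pre1 \<delta> A") (auto simp flip: ennreal_plus simp: ennreal_less_iff)
  then show ?thesis
    unfolding hausdorff_pre1_def[of \<delta> A] INF_less_iff by blast
qed

lemma hausdorff_pre1_le_hausdorff1: "0 < \<delta> \<Longrightarrow> hausdorff_pre1 \<delta> A \<le> hausdorff1 A"
  unfolding hausdorff1_def by (rule SUP_upper) auto

lemma hausdorff_pre1_mono: "A \<subseteq> B \<Longrightarrow> hausdorff_pre1 \<delta> A \<le> hausdorff_pre1 \<delta> B"
  unfolding hausdorff_pre1_def by (rule INF_superset_mono) auto

lemma hausdorff1_mono: "A \<subseteq> B \<Longrightarrow> hausdorff1 A \<le> hausdorff1 B"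
  unfolding hausdorff1_def by (intro SUP_mono) (blast intro: hausdorff_pre1_mono)

lemma hausdorff_pre1_Un: "hausdorff_pre1 \<delta> (A \<union> B) \<le> hausdorff_pre1 \<delta> A + hausdorff_pre1 \<delta> B"
proof (rule ennreal_le_epsilon)
  fix e :: real
  assume fin: "hausdorff_pre1 \<delta> A + hausdorff_pre1 \<delta> B < top" and e: "0 < e"
  have finA: "hausdorff_pre1 \<delta> A < \<infinity>" and finB: "hausdorff_pre1 \<delta> B < \<infinity>"
    using fin by (auto simp: top_unique)
  have "0 < e / 2" using e by simp
  obtain C where
    C: "A \<subseteq> (\<Union>i. C i)" "\<forall>i. bounded (C i) \<and> diameter (C i) \<le> \<delta>"
      "(\<Sum>i. ennreal (diameter (C i))) < hausdorff_pre1 \<delta> A + ennreal (e / 2)"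
    using hausdorff_pre1_approx_cover[OF finA \<open>0 < e / 2\<close>] by (elim exE conjE)
  obtain D where
    D: "B \<subseteq> (\<Union>i. D i)" "\<forall>i. bounded (D i) \<and> diameter (D i) \<le> \<delta>"
      "(\<Sum>i. ennreal (diameter (D i))) < hausdorff_pre1 \<delta> B + ennreal (e / 2)"
    using hausdorff_pre1_approx_cover[OF finB \<open>0 < e / 2\<close>] by (elim exE conjE)
  define E where "E j = (if even j then C (j div 2) else D (j div 2))" for j
  have "A \<union> B \<subseteq> (\<Union>j. E j)"
  proof -
    have "C i \<subseteq> (\<Union>j. E j)" "D i \<subseteq> (\<Union>j. E j)" for i
      using UN_upper[of "2 * i" UNIV E] UN_upper[of "2 * i + 1" UNIV E] by (simp_all add: E_def)
    then show ?thesis using C(1) D(1) by (meson UN_least Un_least order_trans)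
  qed
  then have "hausdorff_pre1 \<delta> (A \<union> B) \<le> (\<Sum>j. ennreal (diameter (E j)))"
    using C(2) D(2) by (intro hausdorff_pre1_le_cover) (auto simp: E_def)
  also have "\<dots> = (\<Sum>i. ennreal (diameter (C i))) + (\<Sum>i. ennreal (diameter (D i)))"
    unfolding E_def if_distrib[of diameter] if_distrib[of ennreal] by (rule suminf_interleave_ennreal)
  also have "\<dots> \<le> hausdorff_pre1 \<delta> A + ennreal (e / 2) + (hausdorff_pre1 \<delta> B + ennreal (e / 2))"
    using C(3) D(3) by (intro add_mono) auto
  also have "\<dots> = hausdorff_pre1 \<delta> A + hausdorff_pre1 \<delta> B + ennreal e"
    using e by (simp add: ac_simps flip: ennreal_plus)
  finally show "hausdorff_pre1 \<delta> (A \<union> B) \<le> hausdorff_pre1 \<delta> A + hausdorff_pre1 \<delta> B + ennreal e" .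
qed

lemma hausdorff1_Un: "hausdorff1 (A \<union> B) \<le> hausdorff1 A + hausdorff1 B"
  unfolding hausdorff1_def[of "A \<union> B"]
proof (rule SUP_least)
  fix \<delta> :: real assume "\<delta> \<in> {0<..}"
  then have "hausdorff_pre1 \<delta> A + hausdorff_pre1 \<delta> B \<le> hausdorff1 A + hausdorff1 B"
    by (intro add_mono hausdorff_pre1_le_hausdorff1) auto
  then show "hausdorff_pre1 \<delta> (A \<union> B) \<le> hausdorff1 A + hausdorff1 B"
    by (rule order_trans[OF hausdorff_pre1_Un])
qed

lemma bounded_real_subset_Icc_diameter:
  fixes S :: "real set"
  assumes "bounded S" "S \<noteq> {}"
  shows "S \<subseteq> {Inf S..Sup S}" "Sup S - Inf S \<le> diameter S"
proof -
  have bdd: "bdd_above S" "bdd_below S"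
    using assms(1) by (auto intro: bounded_imp_bdd_above bounded_imp_bdd_below)
  then show "S \<subseteq> {Inf S..Sup S}" by (auto intro: cInf_lower cSup_upper)
  have "Sup S - diameter S \<le> w" if "w \<in> S" for w
  proof -
    have "z \<le> w + diameter S" if "z \<in> S" for z
      using diameter_bounded_bound[OF assms(1) \<open>z \<in> S\<close> \<open>w \<in> S\<close>] by (simp add: dist_real_def)
    then have "Sup S \<le> w + diameter S" using assms(2) by (intro cSup_least) auto
    then show ?thesis by simp
  qed
  then have "Sup S - diameter S \<le> Inf S" using assms(2) by (intro cInf_greatest) auto
  then show "Sup S - Inf S \<le> diameter S" by simp
qed

lemma Icc_length_le_sum_diameter:
  fixes C :: "nat \<Rightarrow> real set"
  assumes cover: "{a..b} \<subseteq> (\<Union>i. C i)" and bounded: "\<And>i. bounded (C i)"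
  shows "ennreal (b - a) \<le> (\<Sum>i. ennreal (diameter (C i)))"
proof (cases "a \<le> b")
  case False
  then show ?thesis by (simp add: ennreal_neg)
next
  case True
  define I where "I i = (if C i = {} then {} else {Inf (C i)..Sup (C i)})" for i
  have measurable: "range I \<subseteq> sets lborel" by (auto simp: I_def)
  have "{a..b} \<subseteq> (\<Union>i. I i)"
  proof
    fix t assume "t \<in> {a..b}"
    then obtain i where "t \<in> C i" using cover by auto
    moreover have "C i \<subseteq> {Inf (C i)..Sup (C i)}"
      using \<open>t \<in> C i\<close> by (intro bounded_real_subset_Icc_diameter(1)[OF bounded]) auto
    ultimately have "t \<in> I i" by (auto simp: I_def)
    then show "t \<in> (\<Union>i. I i)" by auto
  qed
  have I_le: "emeasure lborel (I i) \<le> ennreal (diameter (C i))" for i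
  proof (cases "C i = {}")
    case False
    then have "Inf (C i) \<le> Sup (C i)" using bounded_real_subset_Icc_diameter(1)[OF bounded False] by auto
    then show ?thesis using bounded_real_subset_Icc_diameter(2)[OF bounded False] by (simp add: I_def ennreal_leI)
  qed (simp add: I_def)
  have "ennreal (b - a) = emeasure lborel {a..b}" using True by simp
  also have "\<dots> \<le> emeasure lborel (\<Union>i. I i)"
    using \<open>{a..b} \<subseteq> (\<Union>i. I i)\<close> sets.countable_UN[OF measurable] by (rule emeasure_mono)
  also have "\<dots> \<le> (\<Sum>i. emeasure lborel (I i))"
    using measurable by (rule emeasure_subadditive_countably)
  also have "\<dots> \<le> (\<Sum>i. ennreal (diameter (C i)))"
    using I_le by (rule suminf_le) auto
  finally show ?thesis .
qed

text \<open>Project orthogonally onto the line through \<open>x\<close> and \<open>y\<close>: the projection does not increase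
  diameters, and the image of \<open>K\<close> contains a segment of length \<open>dist x y\<close>.\<close>

lemma dist_le_sum_diameter_cover:
  fixes K :: "'a::real_inner set"
  assumes "connected K" "x \<in> K" "y \<in> K" and cover: "K \<subseteq> (\<Union>i. C i)" and bounded: "\<And>i. bounded (C i)"
  shows "ennreal (dist x y) \<le> (\<Sum>i. ennreal (diameter (C i)))"
proof (cases "x = y")
  case False
  define u where "u = (y - x) /\<^sub>R norm (y - x)"
  define \<pi> where "\<pi> z = z \<bullet> u" for z
  have "norm u = 1" using False by (simp add: u_def)
  then have lip: "\<bar>\<pi> z - \<pi> w\<bar> \<le> dist z w" for z w
    using Cauchy_Schwarz_ineq2[of "z - w" u] by (simp add: \<pi>_def dist_norm inner_diff_left)
  have lin: "bounded_linear \<pi>" unfolding \<pi>_def by (rule bounded_linear_inner_left)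
  have "\<pi> y - \<pi> x = ((y - x) \<bullet> (y - x)) / norm (y - x)"
    by (simp add: \<pi>_def u_def inner_diff_left divide_inverse right_diff_distrib ac_simps)
  also have "\<dots> = dist x y"
    using False by (simp add: dist_norm norm_minus_commute power2_eq_square flip: power2_norm_eq_inner)
  finally have "\<pi> y - \<pi> x = dist x y" .
  moreover have "{\<pi> x..\<pi> y} \<subseteq> \<pi> ` K"
    using assms(1-3) bounded_linear.continuous_on[OF lin continuous_on_id]
    by (intro connected_contains_Icc connected_continuous_image) auto
  then have "{\<pi> x..\<pi> y} \<subseteq> (\<Union>i. \<pi> ` C i)"
    using order_trans[OF _ image_mono[OF cover]] by (simp add: image_UN)
  then have "ennreal (\<pi> y - \<pi> x) \<le> (\<Sum>i. ennreal (diameter (\<pi> ` C i)))"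
    using bounded_linear_image[OF bounded lin] by (rule Icc_length_le_sum_diameter)
  moreover have "diameter (\<pi> ` C i) \<le> diameter (C i)" for i
  proof (rule diameter_le)
    show "\<pi> ` C i \<noteq> {} \<or> 0 \<le> diameter (C i)" using diameter_ge_0[OF bounded] by simp
    fix v w assume "v \<in> \<pi> ` C i" "w \<in> \<pi> ` C i"
    then obtain z z' where "z \<in> C i" "z' \<in> C i" "v = \<pi> z" "w = \<pi> z'" by auto
    then show "norm (v - w) \<le> diameter (C i)"
      using lip[of z z'] diameter_bounded_bound[OF bounded, of z i z'] by simp
  qed
  then have "(\<Sum>i. ennreal (diameter (\<pi> ` C i))) \<le> (\<Sum>i. ennreal (diameter (C i)))"
    by (intro suminf_le ennreal_leI) auto
  ultimately show ?thesis by (metis order_trans)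
qed simp

lemma dist_le_hausdorff_pre1:
  fixes K :: "'a::euclidean_space set"
  assumes "connected K" "x \<in> K" "y \<in> K"
  shows "ennreal (dist x y) \<le> hausdorff_pre1 \<delta> K"
  unfolding hausdorff_pre1_def
  using dist_le_sum_diameter_cover[OF assms] by (intro INF_greatest) auto

lemma compact_family_separated:
  fixes A :: "'i \<Rightarrow> 'a::metric_space set"
  assumes "finite I" and compact: "\<And>i. i \<in> I \<Longrightarrow> compact (A i)"
    and disjoint: "\<And>i j. i \<in> I \<Longrightarrow> j \<in> I \<Longrightarrow> i \<noteq> j \<Longrightarrow> A i \<inter> A j = {}"
  obtains d where "0 < d" "\<And>i j x y. i \<in> I \<Longrightarrow> j \<in> I \<Longrightarrow> i \<noteq> j \<Longrightarrow> x \<in> A i \<Longrightarrow> y \<in> A j \<Longrightarrow> d \<le> dist x y"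
proof -
  define P where "P = {(i, j) \<in> I \<times> I. i \<noteq> j \<and> A i \<noteq> {} \<and> A j \<noteq> {}}"
  define d where "d = Min (insert 1 ((\<lambda>(i, j). setdist (A i) (A j)) ` P))"
  have "finite P" using assms(1) by (auto simp: P_def intro: finite_subset[of _ "I \<times> I"])
  have "0 < setdist (A i) (A j)" if "(i, j) \<in> P" for i j
    using that compact disjoint by (simp add: P_def setdist_gt_0_compact_closed compact_imp_closed)
  then have "0 < d" using \<open>finite P\<close> by (auto simp: d_def)
  moreover have "d \<le> dist x y"
    if "i \<in> I" "j \<in> I" "i \<noteq> j" "x \<in> A i" "y \<in> A j" for i j x y
  proof -
    have "(i, j) \<in> P" using that by (auto simp: P_def)
    then have "d \<le> setdist (A i) (A j)"
      using \<open>finite P\<close> unfolding d_def by (intro Min_le) (auto intro: rev_image_eqI)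
    also have "\<dots> \<le> dist x y" using that by (simp add: setdist_le_dist)
    finally show ?thesis .
  qed
  ultimately show thesis by (rule that)
qed

lemma sum_diameter_meeting_le:
  assumes "finite I" "bounded C" "diameter C < d"
    and separated: "\<And>i j x y. i \<in> I \<Longrightarrow> j \<in> I \<Longrightarrow> i \<noteq> j \<Longrightarrow> x \<in> A i \<Longrightarrow> y \<in> A j \<Longrightarrow> d \<le> dist x y"
  shows "(\<Sum>i\<in>I. ennreal (diameter (if C \<inter> A i \<noteq> {} then C else {}))) \<le> ennreal (diameter C)"
proof (cases "\<exists>i\<in>I. C \<inter> A i \<noteq> {}")
  case True
  then obtain i0 where "i0 \<in> I" "C \<inter> A i0 \<noteq> {}" by blast
  have unique: "i = i0" if i: "i \<in> I" "C \<inter> A i \<noteq> {}" for i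
  proof (rule ccontr)
    assume "i \<noteq> i0"
    obtain x where x: "x \<in> C" "x \<in> A i" using i(2) by auto
    obtain y where y: "y \<in> C" "y \<in> A i0" using \<open>C \<inter> A i0 \<noteq> {}\<close> by auto
    from x y have "d \<le> dist x y" "dist x y \<le> diameter C"
      using separated[OF i(1) \<open>i0 \<in> I\<close> \<open>i \<noteq> i0\<close>] diameter_bounded_bound[OF \<open>bounded C\<close>] by auto
    then show False using \<open>diameter C < d\<close> by linarith
  qed
  have "(\<Sum>i\<in>I. ennreal (diameter (if C \<inter> A i \<noteq> {} then C else {})))
      = (\<Sum>i\<in>I. if i = i0 then ennreal (diameter C) else 0)"
  proof (rule sum.cong)
    fix i assume "i \<in> I"
    then show "ennreal (diameter (if C \<inter> A i \<noteq> {} then C else {})) = (if i = i0 then ennreal (diameter C) else 0)"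
    proof (cases "i = i0")
      case False
      then have "C \<inter> A i = {}" using unique[OF \<open>i \<in> I\<close>] by auto
      then show ?thesis using False by simp
    qed (use \<open>C \<inter> A i0 \<noteq> {}\<close> in simp)
  qed simp
  also have "\<dots> = ennreal (diameter C)" using \<open>finite I\<close> \<open>i0 \<in> I\<close> by simp
  finally show ?thesis by simp
qed simp

lemma sum_hausdorff_pre1_le_separated:
  fixes A :: "'i \<Rightarrow> 'a::euclidean_space set"
  assumes "finite I"
    and separated: "\<And>i j x y. i \<in> I \<Longrightarrow> j \<in> I \<Longrightarrow> i \<noteq> j \<Longrightarrow> x \<in> A i \<Longrightarrow> y \<in> A j \<Longrightarrow> d \<le> dist x y"
    and "0 < \<delta>" "\<delta> < d"
  shows "(\<Sum>i\<in>I. hausdorff_pre1 \<delta> (A i)) \<le> hausdorff_pre1 \<delta> (\<Union>i\<in>I. A i)"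
  unfolding hausdorff_pre1_def[of \<delta> "\<Union>i\<in>I. A i"]
proof (rule INF_greatest)
  fix C :: "nat \<Rightarrow> 'a set"
  assume "C \<in> {C. (\<Union>i\<in>I. A i) \<subseteq> (\<Union>k. C k) \<and> (\<forall>k. bounded (C k) \<and> diameter (C k) \<le> \<delta>)}"
  then have cover: "(\<Union>i\<in>I. A i) \<subseteq> (\<Union>k. C k)" and bounded: "\<And>k. bounded (C k)"
    and small: "\<And>k. diameter (C k) \<le> \<delta>"
    by auto
  define D where "D i k = (if C k \<inter> A i \<noteq> {} then C k else {})" for i k
  have "hausdorff_pre1 \<delta> (A i) \<le> (\<Sum>k. ennreal (diameter (D i k)))" if i: "i \<in> I" for i
  proof (rule hausdorff_pre1_le_cover)
    show "A i \<subseteq> (\<Union>k. D i k)"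
    proof
      fix x assume "x \<in> A i"
      then obtain k where "x \<in> C k" using cover i by auto
      then have "x \<in> D i k" using \<open>x \<in> A i\<close> by (auto simp: D_def)
      then show "x \<in> (\<Union>k. D i k)" by auto
    qed
    show "bounded (D i k)" "diameter (D i k) \<le> \<delta>" for k
      using bounded small \<open>0 < \<delta>\<close> by (simp_all add: D_def)
  qed
  then have "(\<Sum>i\<in>I. hausdorff_pre1 \<delta> (A i)) \<le> (\<Sum>i\<in>I. \<Sum>k. ennreal (diameter (D i k)))"
    by (rule sum_mono)
  also have "\<dots> = (\<Sum>k. \<Sum>i\<in>I. ennreal (diameter (D i k)))"
    by (rule suminf_sum[symmetric]) (rule summableI)
  also have "\<dots> \<le> (\<Sum>k. ennreal (diameter (C k)))"
  proof (rule suminf_le)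
    fix k
    have small_k: "diameter (C k) < d" using small[of k] \<open>\<delta> < d\<close> by linarith
    show "(\<Sum>i\<in>I. ennreal (diameter (D i k))) \<le> ennreal (diameter (C k))"
      unfolding D_def by (rule sum_diameter_meeting_le[OF \<open>finite I\<close> bounded small_k separated])
  qed (rule summableI)+
  finally show "(\<Sum>i\<in>I. hausdorff_pre1 \<delta> (A i)) \<le> (\<Sum>k. ennreal (diameter (C k)))" .
qed

section \<open>Length of arcs\<close>

text \<open>Disjoint subarcs are compact, hence at positive distance from each other, so for small
  \<open>\<delta>\<close> every set of a \<open>\<delta>\<close>-cover meets at most one of them.\<close>

lemma sum_dist_le_hausdorff1_disjoint_subarcs:
  fixes p :: "real \<Rightarrow> 'a::euclidean_space"
  assumes cont: "continuous_on {c..d} p" and inj: "inj_on p {c..d}" and "finite I"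
    and sub: "\<And>i. i \<in> I \<Longrightarrow> u i \<le> v i \<and> {u i..v i} \<subseteq> {c..d}"
    and disjoint: "\<And>i j. i \<in> I \<Longrightarrow> j \<in> I \<Longrightarrow> i \<noteq> j \<Longrightarrow> {u i..v i} \<inter> {u j..v j} = {}"
  shows "(\<Sum>i\<in>I. ennreal (dist (p (v i)) (p (u i)))) \<le> hausdorff1 (p ` {c..d})"
proof -
  define A where "A i = p ` {u i..v i}" for i
  have cont_i: "continuous_on {u i..v i} p" if "i \<in> I" for i
    using continuous_on_subset[OF cont] sub[OF that] by blast
  have "A i \<inter> A j = {}" if "i \<in> I" "j \<in> I" "i \<noteq> j" for i j
  proof -
    have "p ` ({u i..v i} \<inter> {u j..v j}) = A i \<inter> A j"
      unfolding A_def using sub that by (intro inj_on_image_Int[OF inj]) auto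
    then show ?thesis using disjoint[OF that] by simp
  qed
  then obtain d0 where "0 < d0"
    and separated: "\<And>i j x y. i \<in> I \<Longrightarrow> j \<in> I \<Longrightarrow> i \<noteq> j \<Longrightarrow> x \<in> A i \<Longrightarrow> y \<in> A j \<Longrightarrow> d0 \<le> dist x y"
    using compact_family_separated[OF \<open>finite I\<close>, of A] cont_i
    by (metis A_def compact_Icc compact_continuous_image)
  define \<delta> where "\<delta> = d0 / 2"
  have \<delta>: "0 < \<delta>" "\<delta> < d0" using \<open>0 < d0\<close> by (simp_all add: \<delta>_def)
  have "(\<Sum>i\<in>I. ennreal (dist (p (v i)) (p (u i)))) \<le> (\<Sum>i\<in>I. hausdorff_pre1 \<delta> (A i))"
  proof (rule sum_mono)
    fix i assume "i \<in> I"
    then have "connected (A i)" unfolding A_def using cont_i by (intro connected_continuous_image) auto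
    moreover have "p (v i) \<in> A i" "p (u i) \<in> A i" using sub[OF \<open>i \<in> I\<close>] by (auto simp: A_def)
    ultimately show "ennreal (dist (p (v i)) (p (u i))) \<le> hausdorff_pre1 \<delta> (A i)"
      by (rule dist_le_hausdorff_pre1)
  qed
  also have "\<dots> \<le> hausdorff_pre1 \<delta> (\<Union>i\<in>I. A i)"
    using \<open>finite I\<close> separated \<delta> by (rule sum_hausdorff_pre1_le_separated)
  also have "\<dots> \<le> hausdorff_pre1 \<delta> (p ` {c..d})"
    using sub unfolding A_def by (intro hausdorff_pre1_mono UN_least image_mono) auto
  also have "\<dots> \<le> hausdorff1 (p ` {c..d})"
    using \<delta>(1) by (rule hausdorff_pre1_le_hausdorff1)
  finally show ?thesis .
qed

lemma chain_mono:
  fixes \<tau> :: "nat \<Rightarrow> 'a::order"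
  assumes "\<forall>i<n. \<tau> i \<le> \<tau> (Suc i)" "i \<le> j" "j \<le> n"
  shows "\<tau> i \<le> \<tau> j"
  by (rule lift_Suc_mono_le_ivl[of "{..<n}"]) (use assms in auto)

lemma sum_chords_le_shrunk:
  fixes p :: "real \<Rightarrow> 'a::metric_space"
  assumes mono: "\<forall>i<n. \<tau> i \<le> \<tau> (Suc i)" and "c \<le> \<tau> 0" "\<tau> n \<le> d" and "0 < h"
    and uc: "\<And>s s'. s \<in> {c..d} \<Longrightarrow> s' \<in> {c..d} \<Longrightarrow> dist s' s < 2 * h \<Longrightarrow> dist (p s') (p s) < \<zeta>"
  shows "(\<Sum>i<n. dist (p (\<tau> (Suc i))) (p (\<tau> i)))
    \<le> (\<Sum>i\<in>{i. i < n \<and> \<tau> i + h \<le> \<tau> (Suc i) - h}. dist (p (\<tau> (Suc i) - h)) (p (\<tau> i + h))) + 2 * real n * \<zeta>"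
proof -
  define J where "J = {i. i < n \<and> \<tau> i + h \<le> \<tau> (Suc i) - h}"
  define shrunk where "shrunk i = dist (p (\<tau> (Suc i) - h)) (p (\<tau> i + h))" for i
  have \<tau>_in: "\<tau> i \<in> {c..d}" if "i \<le> n" for i
    using chain_mono[OF mono, of 0 i] chain_mono[OF mono, of i n] that assms(2,3) by auto
  have chord: "dist (p (\<tau> (Suc i))) (p (\<tau> i)) \<le> (if i \<in> J then shrunk i else 0) + 2 * \<zeta>"
    if "i < n" for i
  proof (cases "i \<in> J")
    case True
    have ends: "\<tau> i \<in> {c..d}" "\<tau> (Suc i) \<in> {c..d}" using \<tau>_in that by simp_all
    with True \<open>0 < h\<close> have inner: "\<tau> i + h \<in> {c..d}" "\<tau> (Suc i) - h \<in> {c..d}" by (auto simp: J_def)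
    have "dist (p (\<tau> (Suc i))) (p (\<tau> i))
        \<le> dist (p (\<tau> (Suc i))) (p (\<tau> (Suc i) - h)) + shrunk i + dist (p (\<tau> i + h)) (p (\<tau> i))"
      unfolding shrunk_def
      using dist_triangle[of "p (\<tau> (Suc i))" "p (\<tau> i)" "p (\<tau> (Suc i) - h)"]
        dist_triangle[of "p (\<tau> (Suc i) - h)" "p (\<tau> i)" "p (\<tau> i + h)"] by linarith
    moreover have "dist (p (\<tau> (Suc i))) (p (\<tau> (Suc i) - h)) < \<zeta>" "dist (p (\<tau> i + h)) (p (\<tau> i)) < \<zeta>"
      using uc[OF inner(2) ends(2)] uc[OF ends(1) inner(1)] \<open>0 < h\<close> by (simp_all add: dist_real_def)
    ultimately show ?thesis using True by simp
  next
    case False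
    then have "dist (\<tau> (Suc i)) (\<tau> i) < 2 * h"
      using mono that by (auto simp: J_def dist_real_def)
    then have "dist (p (\<tau> (Suc i))) (p (\<tau> i)) < \<zeta>"
      using uc[of "\<tau> i" "\<tau> (Suc i)"] \<tau>_in[of i] \<tau>_in[of "Suc i"] that by simp
    moreover have "0 \<le> dist (p (\<tau> (Suc i))) (p (\<tau> i))" by simp
    ultimately have "dist (p (\<tau> (Suc i))) (p (\<tau> i)) \<le> 2 * \<zeta>" by linarith
    then show ?thesis using False by simp
  qed
  have "(\<Sum>i<n. dist (p (\<tau> (Suc i))) (p (\<tau> i))) \<le> (\<Sum>i<n. (if i \<in> J then shrunk i else 0) + 2 * \<zeta>)"
    using chord by (rule sum_mono) simp
  also have "\<dots> = (\<Sum>i<n. if i \<in> J then shrunk i else 0) + 2 * real n * \<zeta>"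
    by (simp add: sum.distrib)
  also have "(\<Sum>i<n. if i \<in> J then shrunk i else 0) = (\<Sum>i\<in>J. shrunk i)"
  proof -
    have "{..<n} \<inter> J = J" by (auto simp: J_def)
    then show ?thesis by (metis finite_lessThan sum.inter_restrict)
  qed
  finally show ?thesis unfolding J_def shrunk_def .
qed

lemma polygon_le_hausdorff1:
  fixes p :: "real \<Rightarrow> 'a::euclidean_space"
  assumes cont: "continuous_on {c..d} p" and inj: "inj_on p {c..d}"
    and mono: "\<forall>i<n. \<tau> i \<le> \<tau> (Suc i)" and "c \<le> \<tau> 0" "\<tau> n \<le> d"
  shows "ennreal (\<Sum>i<n. dist (p (\<tau> (Suc i))) (p (\<tau> i))) \<le> hausdorff1 (p ` {c..d})"
proof (rule ennreal_le_epsilon)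
  fix e :: real assume "0 < e"
  define \<zeta> where "\<zeta> = e / (2 * n + 1)"
  have "0 < \<zeta>" using \<open>0 < e\<close> by (simp add: \<zeta>_def)
  have "2 * real n * \<zeta> \<le> e" using \<open>0 < e\<close> by (simp add: \<zeta>_def field_simps)
  obtain \<eta> where "0 < \<eta>"
    and uc: "\<And>s s'. s \<in> {c..d} \<Longrightarrow> s' \<in> {c..d} \<Longrightarrow> dist s' s < \<eta> \<Longrightarrow> dist (p s') (p s) < \<zeta>"
    using compact_uniformly_continuous[OF cont compact_Icc] \<open>0 < \<zeta>\<close>
    unfolding uniformly_continuous_on_def by metis
  define h where "h = \<eta> / 2"
  have "0 < h" using \<open>0 < \<eta>\<close> by (simp add: h_def)
  have uc_h: "\<And>s s'. s \<in> {c..d} \<Longrightarrow> s' \<in> {c..d} \<Longrightarrow> dist s' s < 2 * h \<Longrightarrow> dist (p s') (p s) < \<zeta>"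
    using uc by (simp add: h_def)
  define J where "J = {i. i < n \<and> \<tau> i + h \<le> \<tau> (Suc i) - h}"
  have \<tau>_in: "\<tau> i \<in> {c..d}" if "i \<le> n" for i
    using chain_mono[OF mono, of 0 i] chain_mono[OF mono, of i n] that assms(4,5) by auto
  have "(\<Sum>i<n. dist (p (\<tau> (Suc i))) (p (\<tau> i)))
      \<le> (\<Sum>i\<in>J. dist (p (\<tau> (Suc i) - h)) (p (\<tau> i + h))) + 2 * real n * \<zeta>"
    unfolding J_def by (rule sum_chords_le_shrunk[OF mono assms(4,5) \<open>0 < h\<close> uc_h])
  then have "ennreal (\<Sum>i<n. dist (p (\<tau> (Suc i))) (p (\<tau> i)))
      \<le> ennreal ((\<Sum>i\<in>J. dist (p (\<tau> (Suc i) - h)) (p (\<tau> i + h))) + 2 * real n * \<zeta>)"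
    by (rule ennreal_leI)
  also have "\<dots> = (\<Sum>i\<in>J. ennreal (dist (p (\<tau> (Suc i) - h)) (p (\<tau> i + h)))) + ennreal (2 * real n * \<zeta>)"
    using \<open>0 < \<zeta>\<close> by (simp add: ennreal_plus sum_nonneg)
  also have "\<dots> \<le> hausdorff1 (p ` {c..d}) + ennreal e"
  proof (rule add_mono)
    have after: "\<tau> (Suc i) - h < \<tau> j + h" if "i < j" "j < n" for i j
      using chain_mono[OF mono, of "Suc i" j] that \<open>0 < h\<close> by simp
    show "(\<Sum>i\<in>J. ennreal (dist (p (\<tau> (Suc i) - h)) (p (\<tau> i + h)))) \<le> hausdorff1 (p ` {c..d})"
    proof (rule sum_dist_le_hausdorff1_disjoint_subarcs[OF cont inj, where I = J
          and u = "\<lambda>i. \<tau> i + h" and v = "\<lambda>i. \<tau> (Suc i) - h"])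
      show "finite J" by (simp add: J_def)
      show "\<tau> i + h \<le> \<tau> (Suc i) - h \<and> {\<tau> i + h..\<tau> (Suc i) - h} \<subseteq> {c..d}" if "i \<in> J" for i
        using that \<tau>_in[of i] \<tau>_in[of "Suc i"] \<open>0 < h\<close> by (auto simp: J_def)
      show "{\<tau> i + h..\<tau> (Suc i) - h} \<inter> {\<tau> j + h..\<tau> (Suc j) - h} = {}"
        if "i \<in> J" "j \<in> J" "i \<noteq> j" for i j
        using that after[of i j] after[of j i] by (cases "i < j") (auto simp: J_def)
    qed
    show "ennreal (2 * real n * \<zeta>) \<le> ennreal e" using \<open>2 * real n * \<zeta> \<le> e\<close> by (rule ennreal_leI)
  qed
  finally show "ennreal (\<Sum>i<n. dist (p (\<tau> (Suc i))) (p (\<tau> i))) \<le> hausdorff1 (p ` {c..d}) + ennreal e" .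
qed

lemma sum_dist_le_param_length:
  assumes "t 0 = a" "t n = b" "\<forall>i<n. t i \<le> t (Suc i)"
  shows "(\<Sum>i<n. ennreal (dist (f (t (Suc i))) (f (t i)))) \<le> param_length a b f"
  unfolding param_length_def by (rule SUP_upper2[of "(n, t)"]) (use assms in auto)

lemma param_length_le_hausdorff1:
  fixes f :: "real \<Rightarrow> 'a::euclidean_space"
  assumes "continuous_on {a..b} f" "inj_on f {a..b}"
  shows "param_length a b f \<le> hausdorff1 (f ` {a..b})"
  unfolding param_length_def
proof (rule SUP_least)
  fix x assume "x \<in> {(n, t). t 0 = a \<and> t n = b \<and> (\<forall>i<n. t i \<le> t (Suc i))}"
  then obtain n t where x: "x = (n, t)" and t: "t 0 = a" "t n = b" "\<forall>i<n. t i \<le> t (Suc i)"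
    by blast
  have "(\<Sum>i<n. ennreal (dist (f (t (Suc i))) (f (t i)))) = ennreal (\<Sum>i<n. dist (f (t (Suc i))) (f (t i)))"
    by (rule sum_ennreal) simp
  also have "\<dots> \<le> hausdorff1 (f ` {a..b})"
    using t by (intro polygon_le_hausdorff1[OF assms]) simp_all
  finally show "(case x of (n, t) \<Rightarrow> \<Sum>i<n. ennreal (dist (f (t (Suc i))) (f (t i)))) \<le> hausdorff1 (f ` {a..b})"
    by (simp add: x)
qed

lemma partition_interval_cover:
  fixes t :: "nat \<Rightarrow> real"
  assumes "\<forall>i<N. t i \<le> t (Suc i)" "t 0 \<le> s" "s \<le> t N" "0 < N"
  shows "\<exists>k<N. t k \<le> s \<and> s \<le> t (Suc k)"
  using assms
proof (induction N)
  case (Suc N)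
  show ?case
  proof (cases "s \<le> t N \<and> 0 < N")
    case True
    moreover have "\<forall>i<N. t i \<le> t (Suc i)" using Suc.prems(1) by simp
    ultimately obtain k where "k < N" "t k \<le> s" "s \<le> t (Suc k)"
      using Suc.IH Suc.prems(2) by blast
    then show ?thesis by (intro exI[of _ k]) simp
  next
    case False
    then show ?thesis using Suc.prems by (intro exI[of _ N]) auto
  qed
qed simp

lemma sum_subchords_le_param_length:
  assumes "t 0 = a" "t N = b"
    and sub: "\<And>k. k < N \<Longrightarrow> t k \<le> l k \<and> l k \<le> r k \<and> r k \<le> t (Suc k)"
  shows "(\<Sum>k<N. ennreal (dist (f (r k)) (f (l k)))) \<le> param_length a b f"
proof -
  define s where "s j = (if j mod 3 = 0 then t (j div 3) else if j mod 3 = 1 then l (j div 3) else r (j div 3))" for j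
  have s_mono: "\<forall>j<N * 3. s j \<le> s (Suc j)"
  proof (intro allI impI)
    fix j assume "j < N * 3"
    then have k: "j div 3 < N" by simp
    have "j mod 3 = 0 \<or> j mod 3 = 1 \<or> j mod 3 = 2" by arith
    moreover have "Suc j mod 3 = 1 \<and> Suc j div 3 = j div 3" if "j mod 3 = 0"
      using that by (simp add: mod_Suc div_Suc)
    moreover have "Suc j mod 3 = 2 \<and> Suc j div 3 = j div 3" if "j mod 3 = 1"
      using that by (simp add: mod_Suc div_Suc)
    moreover have "Suc j mod 3 = 0 \<and> Suc j div 3 = Suc (j div 3)" if "j mod 3 = 2"
      using that by (simp add: mod_Suc div_Suc)
    ultimately show "s j \<le> s (Suc j)"
      using sub[OF k] unfolding s_def by (elim disjE) simp_all
  qed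
  have "(\<Sum>k<N. ennreal (dist (f (r k)) (f (l k))))
      \<le> (\<Sum>k<N. \<Sum>j\<in>{k * 3..<k * 3 + 3}. ennreal (dist (f (s (Suc j))) (f (s j))))"
  proof (rule sum_mono)
    fix k :: nat
    have "(k * 3 + 1) mod 3 = 1" "(k * 3 + 1) div 3 = k" "(k * 3 + 2) mod 3 = 2" "(k * 3 + 2) div 3 = k"
      by presburger+
    then have "s (Suc (k * 3 + 1)) = r k" "s (k * 3 + 1) = l k"
      unfolding s_def by (simp_all del: mult_Suc)
    then have "ennreal (dist (f (r k)) (f (l k))) = ennreal (dist (f (s (Suc (k * 3 + 1)))) (f (s (k * 3 + 1))))"
      by simp
    also have "\<dots> \<le> (\<Sum>j\<in>{k * 3..<k * 3 + 3}. ennreal (dist (f (s (Suc j))) (f (s j))))"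
      by (rule member_le_sum) auto
    finally show "ennreal (dist (f (r k)) (f (l k))) \<le> \<dots>" .
  qed
  also have "\<dots> = (\<Sum>j<N * 3. ennreal (dist (f (s (Suc j))) (f (s j))))"
    by (rule sum.nat_group)
  also have "\<dots> \<le> param_length a b f"
    by (rule sum_dist_le_param_length) (use assms(1,2) s_mono in \<open>simp_all add: s_def\<close>)
  finally show ?thesis .
qed

lemma diameter_image_Icc_attained:
  fixes f :: "real \<Rightarrow> 'a::euclidean_space"
  assumes "x \<le> y" "continuous_on {x..y} f"
  obtains l r where "x \<le> l" "l \<le> r" "r \<le> y" "diameter (f ` {x..y}) = dist (f r) (f l)"
proof -
  have "compact (f ` {x..y})" "f ` {x..y} \<noteq> {}"
    using assms by (auto intro: compact_continuous_image)
  then obtain z w where "z \<in> f ` {x..y}" "w \<in> f ` {x..y}" "dist z w = diameter (f ` {x..y})"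
    using diameter_compact_attained by blast
  then obtain u v where uv: "u \<in> {x..y}" "v \<in> {x..y}" "diameter (f ` {x..y}) = dist (f u) (f v)"
    by auto
  show thesis
  proof (cases "u \<le> v")
    case True
    then show ?thesis using uv that[of u v] by (simp add: dist_commute)
  next
    case False
    then show ?thesis using uv that[of v u] by simp
  qed
qed

lemma fine_partition:
  fixes a b \<eta> :: real
  assumes "a < b" "0 < \<eta>"
  obtains N t where "0 < N" "t 0 = a" "t N = b" "\<forall>k<N. t k \<le> t (Suc k)" "\<And>k. t (Suc k) - t k < \<eta>"
proof -
  obtain N :: nat where N: "(b - a) / \<eta> < N" using reals_Archimedean2 by blast
  then have "0 < N" using assms by (cases N) (auto simp: divide_simps)
  define t where "t k = a + real k * (b - a) / real N" for k
  have step: "t (Suc k) - t k = (b - a) / real N" for k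
    unfolding t_def by (simp add: distrib_right add_divide_distrib)
  have "(b - a) / real N < \<eta>" using N assms(2) \<open>0 < N\<close> by (simp add: divide_simps mult.commute)
  moreover have "0 \<le> (b - a) / real N" using assms(1) by simp
  moreover have "t 0 = a" "t N = b" using \<open>0 < N\<close> by (auto simp: t_def)
  ultimately show thesis using that[OF \<open>0 < N\<close>] step by (simp add: algebra_simps)
qed

lemma hausdorff_pre1_image_le_partition:
  fixes f :: "real \<Rightarrow> 'a::euclidean_space"
  assumes cont: "continuous_on {a..b} f" and "0 < N" and t_ends: "t 0 = a" "t N = b"
    and t_mono: "\<forall>k<N. t k \<le> t (Suc k)"
    and small: "\<And>k. k < N \<Longrightarrow> diameter (f ` {t k..t (Suc k)}) \<le> \<delta>" and "0 \<le> \<delta>"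
  shows "hausdorff_pre1 \<delta> (f ` {a..b}) \<le> (\<Sum>k<N. ennreal (diameter (f ` {t k..t (Suc k)})))"
proof -
  define C where "C k = (if k < N then f ` {t k..t (Suc k)} else {})" for k
  have "f ` {a..b} \<subseteq> (\<Union>k. C k)"
  proof
    fix y assume "y \<in> f ` {a..b}"
    then obtain s where "s \<in> {a..b}" "y = f s" by blast
    then obtain k where "k < N" "t k \<le> s" "s \<le> t (Suc k)"
      using partition_interval_cover[OF t_mono] t_ends \<open>0 < N\<close> by auto
    then have "y \<in> C k" using \<open>y = f s\<close> by (auto simp: C_def)
    then show "y \<in> (\<Union>k. C k)" by blast
  qed
  moreover have "bounded (C k)" for k
  proof (cases "k < N")
    case True
    then have "{t k..t (Suc k)} \<subseteq> {a..b}"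
      using chain_mono[OF t_mono, of 0 k] chain_mono[OF t_mono, of "Suc k" N] t_ends by auto
    then show ?thesis
      using compact_imp_bounded[OF compact_continuous_image[OF continuous_on_subset[OF cont]]]
      by (simp add: C_def)
  qed (simp add: C_def)
  moreover have "diameter (C k) \<le> \<delta>" for k
    using small \<open>0 \<le> \<delta>\<close> by (simp add: C_def)
  ultimately have "hausdorff_pre1 \<delta> (f ` {a..b}) \<le> (\<Sum>k. ennreal (diameter (C k)))"
    by (rule hausdorff_pre1_le_cover)
  also have "\<dots> = (\<Sum>k<N. ennreal (diameter (f ` {t k..t (Suc k)})))"
    by (subst suminf_finite[of "{..<N}"]) (auto simp: C_def)
  finally show ?thesis .
qed

lemma hausdorff1_le_param_length:
  fixes f :: "real \<Rightarrow> 'a::euclidean_space"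
  assumes "a < b" and cont: "continuous_on {a..b} f"
  shows "hausdorff1 (f ` {a..b}) \<le> param_length a b f"
  unfolding hausdorff1_def
proof (rule SUP_least)
  fix \<delta> :: real assume "\<delta> \<in> {0<..}"
  then obtain \<eta> where "0 < \<eta>"
    and uc: "\<And>s s'. s \<in> {a..b} \<Longrightarrow> s' \<in> {a..b} \<Longrightarrow> dist s' s < \<eta> \<Longrightarrow> dist (f s') (f s) < \<delta>"
    using compact_uniformly_continuous[OF cont compact_Icc] unfolding uniformly_continuous_on_def
    by (metis greaterThan_iff)
  obtain N t where "0 < N" and t_ends: "t 0 = a" "t N = b" and t_mono: "\<forall>k<N. t k \<le> t (Suc k)"
    and t_step: "\<And>k. t (Suc k) - t k < \<eta>"
    by (rule fine_partition[OF \<open>a < b\<close> \<open>0 < \<eta>\<close>]) blast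
  have t_sub: "{t k..t (Suc k)} \<subseteq> {a..b}" if "k < N" for k
    using chain_mono[OF t_mono, of 0 k] chain_mono[OF t_mono, of "Suc k" N] that t_ends by auto
  have small: "diameter (f ` {t k..t (Suc k)}) \<le> \<delta>" if "k < N" for k
  proof (rule diameter_le)
    fix x y assume "x \<in> f ` {t k..t (Suc k)}" "y \<in> f ` {t k..t (Suc k)}"
    then obtain u v where uv: "u \<in> {t k..t (Suc k)}" "v \<in> {t k..t (Suc k)}" "x = f u" "y = f v" by blast
    then have "dist v u < \<eta>" using t_step[of k] by (auto simp: dist_real_def abs_less_iff)
    then show "norm (x - y) \<le> \<delta>" using uc[of u v] uv t_sub[OF that] by (auto simp: dist_norm norm_minus_commute)
  qed (use \<open>\<delta> \<in> {0<..}\<close> in simp)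
  have "\<exists>lk rk. t k \<le> lk \<and> lk \<le> rk \<and> rk \<le> t (Suc k) \<and>
      diameter (f ` {t k..t (Suc k)}) = dist (f rk) (f lk)" if "k < N" for k
    by (rule diameter_image_Icc_attained[OF _ continuous_on_subset[OF cont t_sub[OF that]]])
      (use t_mono that in auto)
  then obtain l r where lr: "\<And>k. k < N \<Longrightarrow> t k \<le> l k \<and> l k \<le> r k \<and> r k \<le> t (Suc k) \<and>
      diameter (f ` {t k..t (Suc k)}) = dist (f (r k)) (f (l k))"
    by metis
  have "hausdorff_pre1 \<delta> (f ` {a..b}) \<le> (\<Sum>k<N. ennreal (diameter (f ` {t k..t (Suc k)})))"
    using small \<open>\<delta> \<in> {0<..}\<close> by (intro hausdorff_pre1_image_le_partition[OF cont \<open>0 < N\<close> t_ends t_mono]) auto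
  also have "\<dots> = (\<Sum>k<N. ennreal (dist (f (r k)) (f (l k))))"
    using lr by (intro sum.cong) auto
  also have "\<dots> \<le> param_length a b f"
    by (rule sum_subchords_le_param_length[OF t_ends]) (use lr in auto)
  finally show "hausdorff_pre1 \<delta> (f ` {a..b}) \<le> param_length a b f" .
qed

lemma param_length_linepath_le: "param_length 0 1 (linepath p q) \<le> ennreal (dist p q)"
  unfolding param_length_def
proof (rule SUP_least, clarify)
  fix n :: nat and t :: "nat \<Rightarrow> real"
  assume t: "t 0 = 0" "t n = 1" "\<forall>i<n. t i \<le> t (Suc i)"
  have "dist (linepath p q x) (linepath p q y) = \<bar>x - y\<bar> * dist p q" for x y
  proof -
    have "linepath p q x - linepath p q y = (x - y) *\<^sub>R (q - p)" by (simp add: linepath_def algebra_simps)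
    then show ?thesis by (simp add: dist_norm norm_minus_commute)
  qed
  then have "(\<Sum>i<n. ennreal (dist (linepath p q (t (Suc i))) (linepath p q (t i))))
      = ennreal (\<Sum>i<n. (t (Suc i) - t i) * dist p q)"
    using t(3) by (subst sum_ennreal) (auto intro!: sum.cong)
  also have "(\<Sum>i<n. (t (Suc i) - t i) * dist p q) = dist p q"
    using t by (simp add: sum_distrib_right[symmetric] sum_lessThan_telescope)
  finally show "(\<Sum>i<n. ennreal (dist (linepath p q (t (Suc i))) (linepath p q (t i)))) \<le> ennreal (dist p q)"
    by simp
qed

lemma hausdorff1_closed_segment_le: "hausdorff1 (closed_segment p q) \<le> ennreal (dist p q)"
proof -
  have "hausdorff1 (closed_segment p q) = hausdorff1 (linepath p q ` {0..1})"
    by (metis path_image_def path_image_linepath)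
  also have "\<dots> \<le> param_length 0 1 (linepath p q)"
    using path_linepath[of p q] unfolding path_def by (intro hausdorff1_le_param_length) auto
  also have "\<dots> \<le> ennreal (dist p q)" by (rule param_length_linepath_le)
  finally show ?thesis .
qed

lemma rectifiable_curve_hausdorff1_finite:
  fixes \<Gamma> :: "'a::euclidean_space set"
  assumes "rectifiable_curve \<Gamma>"
  shows "hausdorff1 \<Gamma> < \<infinity>"
proof -
  obtain a b and f :: "real \<Rightarrow> 'a" where "a < b" "continuous_on {a..b} f" "\<Gamma> = f ` {a..b}"
    and "param_length a b f < \<infinity>"
    using assms unfolding rectifiable_curve_def by blast
  then show ?thesis
    using hausdorff1_le_param_length[OF \<open>a < b\<close> \<open>continuous_on {a..b} f\<close>] by simp
qed

section \<open>Short connections inside the sausage\<close>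

lemma Lfun_le_arc:
  fixes h :: "real \<Rightarrow> 'a::euclidean_space"
  assumes "arc h" "path_image h \<subseteq> sausage \<Gamma> \<epsilon>" "pathstart h = p1" "pathfinish h = p2"
    and finite: "hausdorff1 (path_image h) < \<infinity>"
  shows "Lfun \<Gamma> \<epsilon> p1 p2 \<le> hausdorff1 (path_image h)"
proof -
  have cont: "continuous_on {0..1} h" and inj: "inj_on h {0..1}"
    using assms(1) by (auto simp: arc_def path_def)
  have image: "path_image h = h ` {0..1}" by (simp add: path_image_def)
  have "param_length 0 1 h < \<infinity>"
    using param_length_le_hausdorff1[OF cont inj] finite by (simp add: image le_less_trans)
  then have "simple_curve (path_image h) \<and> rectifiable_curve (path_image h)"
    unfolding simple_curve_def rectifiable_curve_def image using cont inj
    by (intro conjI exI[of _ 0] exI[of _ 1] exI[of _ h]) auto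
  moreover have "p1 \<in> path_image h" "p2 \<in> path_image h"
    using assms(3,4) by auto
  ultimately show ?thesis
    unfolding Lfun_def using assms(2) by (intro INF_lower) simp
qed

lemma subset_sausage: "0 \<le> \<epsilon> \<Longrightarrow> A \<subseteq> sausage A \<epsilon>"
  by (auto simp: sausage_def)

lemma sausage_mono: "\<epsilon> \<le> \<epsilon>' \<Longrightarrow> sausage A \<epsilon> \<subseteq> sausage A \<epsilon>'"
  by (auto simp: sausage_def)

lemma closed_segment_subset_sausage:
  assumes "q \<in> A" "dist p q \<le> \<epsilon>"
  shows "closed_segment p q \<subseteq> sausage A \<epsilon>"
proof
  fix z assume "z \<in> closed_segment p q"
  then have "dist z q \<le> \<epsilon>" using dist_in_closed_segment[of z p q] assms(2) by linarith
  then show "z \<in> sausage A \<epsilon>" using assms(1) by (simp add: sausage_def infdist_le2)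
qed

lemma sausage_nearest_point:
  assumes "closed A" "A \<noteq> {}" "p \<in> sausage A \<epsilon>"
  obtains q where "q \<in> A" "dist p q \<le> \<epsilon>"
proof -
  obtain q where "q \<in> A" "infdist p A = dist p q" using infdist_attains_inf[OF assms(1,2)] by blast
  then show thesis using that assms(3) by (simp add: sausage_def)
qed

lemma Lfun_le_hausdorff1_add:
  fixes \<Gamma> :: "'a::euclidean_space set"
  assumes "compact \<Gamma>" "path_connected \<Gamma>" "\<Gamma> \<noteq> {}" and finite: "hausdorff1 \<Gamma> < \<infinity>"
    and "0 < \<epsilon>" "p1 \<in> sausage \<Gamma> \<epsilon>" "p2 \<in> sausage \<Gamma> \<epsilon>" "p1 \<noteq> p2"
  shows "Lfun \<Gamma> \<epsilon> p1 p2 \<le> hausdorff1 \<Gamma> + ennreal (2 * \<epsilon>)"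
proof -
  obtain q1 where q1: "q1 \<in> \<Gamma>" "dist p1 q1 \<le> \<epsilon>"
    using sausage_nearest_point[OF compact_imp_closed[OF assms(1)] assms(3,6)] by blast
  obtain q2 where q2: "q2 \<in> \<Gamma>" "dist p2 q2 \<le> \<epsilon>"
    using sausage_nearest_point[OF compact_imp_closed[OF assms(1)] assms(3,7)] by blast
  have "\<exists>\<gamma>. path \<gamma> \<and> path_image \<gamma> \<subseteq> \<Gamma> \<and> pathstart \<gamma> = q1 \<and> pathfinish \<gamma> = q2"
    using bspec[OF bspec[OF assms(2)[unfolded path_connected_def] q1(1)] q2(1)] .
  then obtain \<gamma> where \<gamma>: "path \<gamma>" "path_image \<gamma> \<subseteq> \<Gamma>" "pathstart \<gamma> = q1" "pathfinish \<gamma> = q2"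
    by blast
  define \<gamma>' where "\<gamma>' = linepath p1 q1 +++ \<gamma> +++ linepath q2 p2"
  have path: "path \<gamma>'" "pathstart \<gamma>' = p1" "pathfinish \<gamma>' = p2"
    using \<gamma> by (simp_all add: \<gamma>'_def)
  obtain h where h: "arc h" "path_image h \<subseteq> path_image \<gamma>'" "pathstart h = p1" "pathfinish h = p2"
    using path_contains_arc[OF path \<open>p1 \<noteq> p2\<close>] by blast
  have image: "path_image \<gamma>' = closed_segment p1 q1 \<union> path_image \<gamma> \<union> closed_segment p2 q2"
    using \<gamma> by (simp add: \<gamma>'_def path_image_join Un_assoc closed_segment_commute)
  have "hausdorff1 (path_image h) \<le> hausdorff1 (closed_segment p1 q1 \<union> path_image \<gamma>) + hausdorff1 (closed_segment p2 q2)"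
    using h(2) image order_trans[OF hausdorff1_mono hausdorff1_Un] by metis
  also have "\<dots> \<le> hausdorff1 (closed_segment p1 q1) + hausdorff1 (path_image \<gamma>) + hausdorff1 (closed_segment p2 q2)"
    by (rule add_right_mono[OF hausdorff1_Un])
  also have "\<dots> \<le> ennreal \<epsilon> + hausdorff1 \<Gamma> + ennreal \<epsilon>"
    using q1(2) q2(2) \<gamma>(2)
    by (intro add_mono order_trans[OF hausdorff1_closed_segment_le] ennreal_leI hausdorff1_mono)
  also have "\<dots> = hausdorff1 \<Gamma> + ennreal (2 * \<epsilon>)"
    using \<open>0 < \<epsilon>\<close> by (simp add: ac_simps flip: ennreal_plus)
  finally have length: "hausdorff1 (path_image h) \<le> hausdorff1 \<Gamma> + ennreal (2 * \<epsilon>)" .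
  have "closed_segment p1 q1 \<union> path_image \<gamma> \<union> closed_segment p2 q2 \<subseteq> sausage \<Gamma> \<epsilon>"
    using closed_segment_subset_sausage[OF q1] closed_segment_subset_sausage[OF q2]
      order_trans[OF \<gamma>(2) subset_sausage] \<open>0 < \<epsilon>\<close> by simp
  with h(2) have "path_image h \<subseteq> sausage \<Gamma> \<epsilon>" unfolding image by (rule order_trans)
  moreover have "hausdorff1 (path_image h) < \<infinity>"
    using length finite \<open>0 < \<epsilon>\<close> by (simp add: le_less_trans)
  ultimately have "Lfun \<Gamma> \<epsilon> p1 p2 \<le> hausdorff1 (path_image h)"
    using h(1,3,4) by (intro Lfun_le_arc)
  then show ?thesis using length by (rule order_trans)
qed

lemma Lfun_same_points_le: "Lfun \<Gamma> \<epsilon> p p \<le> Lfun \<Gamma> \<epsilon> p q"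
  unfolding Lfun_def by (rule INF_superset_mono) auto

lemma SUP_Lfun_le_hausdorff1_add:
  fixes \<Gamma> :: "'a::euclidean_space set"
  assumes "compact \<Gamma>" "path_connected \<Gamma>" "hausdorff1 \<Gamma> < \<infinity>" "x \<in> \<Gamma>" "y \<in> \<Gamma>" "x \<noteq> y" "0 < \<epsilon>"
  shows "(SUP p \<in> sausage \<Gamma> \<epsilon> \<times> sausage \<Gamma> \<epsilon>. Lfun \<Gamma> \<epsilon> (fst p) (snd p)) \<le> hausdorff1 \<Gamma> + ennreal (2 * \<epsilon>)"
proof (rule SUP_least)
  fix p assume p: "p \<in> sausage \<Gamma> \<epsilon> \<times> sausage \<Gamma> \<epsilon>"
  have "\<Gamma> \<noteq> {}" using assms(4) by blast
  note bound = Lfun_le_hausdorff1_add[OF assms(1,2) \<open>\<Gamma> \<noteq> {}\<close> assms(3,7)]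
  show "Lfun \<Gamma> \<epsilon> (fst p) (snd p) \<le> hausdorff1 \<Gamma> + ennreal (2 * \<epsilon>)"
  proof (cases "fst p = snd p")
    case False
    then show ?thesis using p by (intro bound) (auto simp: mem_Times_iff)
  next
    case True
    define q where "q = (if x = fst p then y else x)"
    have "q \<in> \<Gamma>" "q \<noteq> fst p" using assms(4-6) by (auto simp: q_def)
    then have "q \<in> sausage \<Gamma> \<epsilon>" using \<open>0 < \<epsilon>\<close> by (simp add: sausage_def)
    have "Lfun \<Gamma> \<epsilon> (fst p) (snd p) \<le> Lfun \<Gamma> \<epsilon> (fst p) q"
      unfolding True by (rule Lfun_same_points_le)
    also have "\<dots> \<le> hausdorff1 \<Gamma> + ennreal (2 * \<epsilon>)"
      using p \<open>q \<in> sausage \<Gamma> \<epsilon>\<close> \<open>q \<noteq> fst p\<close> by (intro bound) (auto simp: mem_Times_iff)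
    finally show ?thesis .
  qed
qed

section \<open>Curves in the sausage are long\<close>

lemma simple_curve_subarc:
  fixes \<Gamma> :: "'a::euclidean_space set"
  assumes "simple_curve \<Gamma>" "x \<in> \<Gamma>" "y \<in> \<Gamma>" "x \<noteq> y"
  obtains c d and p :: "real \<Rightarrow> 'a" where "c < d" "continuous_on {c..d} p" "inj_on p {c..d}"
    "p ` {c..d} \<subseteq> \<Gamma>" "p c = x" "p d = y"
proof -
  obtain a b and h :: "real \<Rightarrow> 'a" where h: "continuous_on {a..b} h" "inj_on h {a..b}" "\<Gamma> = h ` {a..b}"
    using assms(1) unfolding simple_curve_def by blast
  obtain \<sigma>1 \<sigma>2 where \<sigma>: "\<sigma>1 \<in> {a..b}" "\<sigma>2 \<in> {a..b}" "h \<sigma>1 = x" "h \<sigma>2 = y"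
    using assms(2,3) h(3) by auto
  then have "\<sigma>1 \<noteq> \<sigma>2" using assms(4) by auto
  then consider "\<sigma>1 < \<sigma>2" | "\<sigma>2 < \<sigma>1" by linarith
  then show thesis
  proof cases
    case 1
    have sub: "{\<sigma>1..\<sigma>2} \<subseteq> {a..b}" using \<sigma> by auto
    then have "continuous_on {\<sigma>1..\<sigma>2} h" "inj_on h {\<sigma>1..\<sigma>2}" "h ` {\<sigma>1..\<sigma>2} \<subseteq> \<Gamma>"
      using continuous_on_subset[OF h(1) sub] inj_on_subset[OF h(2) sub] h(3) by auto
    then show thesis using that[OF 1 _ _ _ \<sigma>(3,4)] by simp
  next
    case 2
    define p where "p s = h (\<sigma>1 + \<sigma>2 - s)" for s
    have flip: "(\<lambda>s. \<sigma>1 + \<sigma>2 - s) ` {\<sigma>2..\<sigma>1} = {\<sigma>2..\<sigma>1}" by auto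
    have sub: "{\<sigma>2..\<sigma>1} \<subseteq> {a..b}" using \<sigma> by auto
    have "p ` {\<sigma>2..\<sigma>1} = h ` ((\<lambda>s. \<sigma>1 + \<sigma>2 - s) ` {\<sigma>2..\<sigma>1})"
      unfolding p_def by (rule image_image[symmetric])
    then have "p ` {\<sigma>2..\<sigma>1} \<subseteq> \<Gamma>" using flip sub h(3) by auto
    moreover have "continuous_on {\<sigma>2..\<sigma>1} (\<lambda>s. \<sigma>1 + \<sigma>2 - s)" by (intro continuous_intros)
    then have "continuous_on {\<sigma>2..\<sigma>1} p"
      unfolding p_def by (rule continuous_on_compose2[OF continuous_on_subset[OF h(1) sub]]) (simp add: flip)
    moreover have "inj_on (\<lambda>s. \<sigma>1 + \<sigma>2 - s) {\<sigma>2..\<sigma>1}" by (auto simp: inj_on_def)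
    then have "inj_on (h \<circ> (\<lambda>s. \<sigma>1 + \<sigma>2 - s)) {\<sigma>2..\<sigma>1}"
      using inj_on_subset[OF h(2) sub] flip by (intro comp_inj_on) simp_all
    then have "inj_on p {\<sigma>2..\<sigma>1}" unfolding p_def comp_def .
    moreover have "p \<sigma>2 = x" "p \<sigma>1 = y" using \<sigma> by (simp_all add: p_def)
    ultimately show thesis using that[OF 2] by simp
  qed
qed

lemma exists_mono_level_times:
  fixes \<phi> :: "real \<Rightarrow> real" and t :: "nat \<Rightarrow> real"
  assumes "c \<le> d" and cont: "continuous_on {c..d} \<phi>"
    and "\<phi> c \<le> t 0" and mono: "\<forall>i<n. t i \<le> t (Suc i)" and "t n \<le> \<phi> d"
  shows "\<exists>\<tau>. (\<forall>i<n. \<tau> i \<le> \<tau> (Suc i)) \<and> (\<forall>i\<le>n. \<tau> i \<in> {c..d} \<and> \<phi> (\<tau> i) = t i)"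
proof -
  define S where "S i = {c..d} \<inter> \<phi> -` {t i..}" for i
  define \<tau> where "\<tau> i = Inf (S i)" for i
  have bdd: "bdd_below (S i)" for i by (rule bdd_belowI[of _ c]) (simp add: S_def)
  have d_in: "d \<in> S i" if "i \<le> n" for i
    using chain_mono[OF mono that order_refl] \<open>t n \<le> \<phi> d\<close> \<open>c \<le> d\<close> by (simp add: S_def)
  have closed: "closed (S i)" for i
    unfolding S_def by (intro continuous_closed_preimage[OF cont]) auto
  have \<tau>_in: "\<tau> i \<in> S i" if "i \<le> n" for i
    unfolding \<tau>_def using d_in[OF that] bdd closed by (intro closed_contains_Inf) auto
  have "\<tau> i \<le> \<tau> (Suc i)" if "i < n" for i
  proof -
    have "S (Suc i) \<subseteq> S i" using mono that by (auto simp: S_def)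
    then show ?thesis unfolding \<tau>_def using d_in[of "Suc i"] that bdd by (intro cInf_superset_mono) auto
  qed
  moreover have "\<phi> (\<tau> i) = t i" if "i \<le> n" for i
  proof -
    have "\<phi> c \<le> t i" using chain_mono[OF mono, of 0 i] that \<open>\<phi> c \<le> t 0\<close> by simp
    moreover have "t i \<le> \<phi> (\<tau> i)" "c \<le> \<tau> i" "\<tau> i \<le> d" using \<tau>_in[OF that] by (auto simp: S_def)
    moreover have "continuous_on {c..\<tau> i} \<phi>"
      using continuous_on_subset[OF cont] \<open>\<tau> i \<le> d\<close> by auto
    ultimately obtain s where s: "c \<le> s" "s \<le> \<tau> i" "\<phi> s = t i"
      using IVT'[of \<phi> c "t i" "\<tau> i"] by blast
    then have "s \<in> S i" using \<open>\<tau> i \<le> d\<close> by (simp add: S_def)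
    then have "\<tau> i \<le> s" unfolding \<tau>_def using bdd by (rule cInf_lower)
    then show ?thesis using s by simp
  qed
  moreover have "\<tau> i \<in> {c..d}" if "i \<le> n" for i using \<tau>_in[OF that] by (simp add: S_def)
  ultimately show ?thesis by blast
qed

lemma arc_inverse_extension:
  fixes g :: "real \<Rightarrow> 'a::euclidean_space"
  assumes "a \<le> b" and cont: "continuous_on {a..b} g" and inj: "inj_on g {a..b}"
  obtains G where "continuous_on UNIV G" "\<And>u. u \<in> {a..b} \<Longrightarrow> G (g u) = u" "\<And>x. G x \<in> {a..b}"
proof -
  define \<Gamma> where "\<Gamma> = g ` {a..b}"
  have "compact \<Gamma>" unfolding \<Gamma>_def using cont compact_Icc by (rule compact_continuous_image)
  have inv: "continuous_on \<Gamma> (inv_into {a..b} g)"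
    using continuous_on_inv[OF cont compact_Icc, of "inv_into {a..b} g"] inj by (simp add: \<Gamma>_def)
  have closed: "closedin (top_of_set UNIV) \<Gamma>"
    using closedin_closed_Int[OF compact_imp_closed[OF \<open>compact \<Gamma>\<close>], of UNIV] by simp
  show thesis
  proof (rule Tietze_closed_interval_1[OF inv closed \<open>a \<le> b\<close>])
    fix x assume "x \<in> \<Gamma>"
    then show "inv_into {a..b} g x \<in> cbox a b" using inj by (auto simp: \<Gamma>_def)
  next
    fix G assume "continuous_on UNIV G" "\<And>x. x \<in> \<Gamma> \<Longrightarrow> G x = inv_into {a..b} g x"
      "\<And>x. x \<in> UNIV \<Longrightarrow> G x \<in> cbox a b"
    then show thesis using that inj by (simp add: \<Gamma>_def)
  qed
qed

lemma arc_retraction_near: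
  fixes g :: "real \<Rightarrow> 'a::euclidean_space"
  assumes "a \<le> b" and cont: "continuous_on {a..b} g" and inj: "inj_on g {a..b}" and "0 < r"
  obtains \<epsilon>0 G where "0 < \<epsilon>0" "continuous_on UNIV G" "\<And>u. u \<in> {a..b} \<Longrightarrow> G (g u) = u"
    "\<And>x. infdist x (g ` {a..b}) \<le> \<epsilon>0 \<Longrightarrow> dist x (g (G x)) < r"
proof -
  define \<Gamma> where "\<Gamma> = g ` {a..b}"
  have "compact \<Gamma>" unfolding \<Gamma>_def using cont compact_Icc by (rule compact_continuous_image)
  have "\<Gamma> \<noteq> {}" using \<open>a \<le> b\<close> by (auto simp: \<Gamma>_def)
  obtain G where G: "continuous_on UNIV G" "\<And>u. u \<in> {a..b} \<Longrightarrow> G (g u) = u" "\<And>x. G x \<in> {a..b}"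
    by (rule arc_inverse_extension[OF assms(1-3)]) blast
  have "0 < r / 2" using \<open>0 < r\<close> by simp
  then obtain \<omega> where "0 < \<omega>"
    and ucg: "\<And>u v. u \<in> {a..b} \<Longrightarrow> v \<in> {a..b} \<Longrightarrow> dist v u < \<omega> \<Longrightarrow> dist (g v) (g u) < r / 2"
    using compact_uniformly_continuous[OF cont compact_Icc]
    unfolding uniformly_continuous_on_def by metis
  obtain R where R: "\<And>q. q \<in> \<Gamma> \<Longrightarrow> norm q \<le> R"
    using compact_imp_bounded[OF \<open>compact \<Gamma>\<close>] by (auto simp: bounded_iff)
  have "uniformly_continuous_on (cball 0 (R + 1)) G"
    using continuous_on_subset[OF G(1)] by (intro compact_uniformly_continuous) auto
  then obtain \<theta> where "0 < \<theta>" and ucG: "\<And>x y. x \<in> cball 0 (R + 1) \<Longrightarrow> y \<in> cball 0 (R + 1) \<Longrightarrow>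
      dist y x < \<theta> \<Longrightarrow> dist (G y) (G x) < \<omega>"
    using \<open>0 < \<omega>\<close> unfolding uniformly_continuous_on_def by metis
  define \<epsilon>0 where "\<epsilon>0 = min 1 (min (\<theta> / 2) (r / 2))"
  have "dist x (g (G x)) < r" if "infdist x \<Gamma> \<le> \<epsilon>0" for x
  proof -
    obtain q where "q \<in> \<Gamma>" "infdist x \<Gamma> = dist x q"
      using infdist_attains_inf[OF compact_imp_closed[OF \<open>compact \<Gamma>\<close>] \<open>\<Gamma> \<noteq> {}\<close>] by blast
    with that have xq: "dist x q \<le> \<epsilon>0" by simp
    obtain u where u: "u \<in> {a..b}" "q = g u" using \<open>q \<in> \<Gamma>\<close> by (auto simp: \<Gamma>_def)
    have "norm q \<le> R" using R \<open>q \<in> \<Gamma>\<close> by blast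
    moreover have "norm x \<le> norm q + dist x q"
      using norm_triangle_ineq[of q "x - q"] by (simp add: dist_norm)
    ultimately have "q \<in> cball 0 (R + 1)" "x \<in> cball 0 (R + 1)"
      using xq by (auto simp: \<epsilon>0_def)
    moreover have "dist x q < \<theta>" using xq \<open>0 < \<theta>\<close> by (simp add: \<epsilon>0_def)
    ultimately have "dist (G x) u < \<omega>"
      using ucG[of q x] G(2) u by (simp add: dist_commute)
    then have "dist (g (G x)) q < r / 2" using ucg G(3) u by simp
    then have "dist x (g (G x)) < dist x q + r / 2"
      using dist_triangle[of x "g (G x)" q] by (simp add: dist_commute)
    then show "dist x (g (G x)) < r" using xq by (simp add: \<epsilon>0_def)
  qed
  moreover have "0 < \<epsilon>0" using \<open>0 < \<theta>\<close> \<open>0 < r\<close> by (simp add: \<epsilon>0_def)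
  ultimately show thesis using that[of \<epsilon>0 G] G(1,2) by (simp add: \<Gamma>_def)
qed

lemma sum_dist_le_perturbed:
  fixes x y :: "nat \<Rightarrow> 'a::metric_space"
  assumes "\<And>i. i \<le> n \<Longrightarrow> dist (x i) (y i) < r"
  shows "(\<Sum>i<n. dist (y (Suc i)) (y i)) \<le> (\<Sum>i<n. dist (x (Suc i)) (x i)) + 2 * real n * r"
proof -
  have "dist (y (Suc i)) (y i) \<le> dist (x (Suc i)) (x i) + 2 * r" if "i < n" for i
  proof -
    have "dist (y (Suc i)) (y i) \<le> dist (y (Suc i)) (x (Suc i)) + dist (x (Suc i)) (x i) + dist (x i) (y i)"
      using dist_triangle[of "y (Suc i)" "y i" "x (Suc i)"] dist_triangle[of "x (Suc i)" "y i" "x i"]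
      by linarith
    then show ?thesis using assms[of i] assms[of "Suc i"] that by (simp add: dist_commute)
  qed
  then have "(\<Sum>i<n. dist (y (Suc i)) (y i)) \<le> (\<Sum>i<n. dist (x (Suc i)) (x i) + 2 * r)"
    by (intro sum_mono) simp
  then show ?thesis by (simp add: sum.distrib)
qed

text \<open>The times \<open>\<tau> i\<close> at which \<open>G \<circ> p\<close> first reaches \<open>t i\<close> are increasing, and \<open>p (\<tau> i)\<close> is
  within \<open>r\<close> of \<open>g (G (p (\<tau> i))) = g (t i)\<close>.\<close>

lemma polygon_le_hausdorff1_near_arc:
  fixes g :: "real \<Rightarrow> 'a::euclidean_space"
  assumes "a < b" and cont: "continuous_on {a..b} g" and inj: "inj_on g {a..b}"
    and t: "t 0 = a" "t n = b" "\<forall>i<n. t i \<le> t (Suc i)" and "0 < r"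
  obtains \<epsilon>0 where "0 < \<epsilon>0"
    "\<And>\<Gamma>'. simple_curve \<Gamma>' \<Longrightarrow> \<Gamma>' \<subseteq> sausage (g ` {a..b}) \<epsilon>0 \<Longrightarrow> g a \<in> \<Gamma>' \<Longrightarrow> g b \<in> \<Gamma>' \<Longrightarrow>
      ennreal ((\<Sum>i<n. dist (g (t (Suc i))) (g (t i))) - 2 * real n * r) \<le> hausdorff1 \<Gamma>'"
proof -
  obtain \<epsilon>0 G where "0 < \<epsilon>0" and G: "continuous_on UNIV G" "\<And>u. u \<in> {a..b} \<Longrightarrow> G (g u) = u"
    and near: "\<And>x. infdist x (g ` {a..b}) \<le> \<epsilon>0 \<Longrightarrow> dist x (g (G x)) < r"
    by (rule arc_retraction_near[OF less_imp_le[OF \<open>a < b\<close>] cont inj \<open>0 < r\<close>]) blast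
  have "g a \<noteq> g b" using inj \<open>a < b\<close> by (auto dest: inj_onD)
  have bound: "ennreal ((\<Sum>i<n. dist (g (t (Suc i))) (g (t i))) - 2 * real n * r) \<le> hausdorff1 \<Gamma>'"
    if \<Gamma>': "simple_curve \<Gamma>'" "\<Gamma>' \<subseteq> sausage (g ` {a..b}) \<epsilon>0" "g a \<in> \<Gamma>'" "g b \<in> \<Gamma>'" for \<Gamma>'
  proof -
    obtain c d and p :: "real \<Rightarrow> 'a" where p: "c < d" "continuous_on {c..d} p" "inj_on p {c..d}"
      "p ` {c..d} \<subseteq> \<Gamma>'" "p c = g a" "p d = g b"
      by (rule simple_curve_subarc[OF \<Gamma>'(1,3,4) \<open>g a \<noteq> g b\<close>]) blast
    have "continuous_on {c..d} (G \<circ> p)"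
      using p(2) continuous_on_subset[OF G(1)] by (intro continuous_on_compose) auto
    moreover have "(G \<circ> p) c = t 0" "(G \<circ> p) d = t n" using p(5,6) G(2) t \<open>a < b\<close> by auto
    ultimately have "\<exists>\<tau>. (\<forall>i<n. \<tau> i \<le> \<tau> (Suc i)) \<and> (\<forall>i\<le>n. \<tau> i \<in> {c..d} \<and> (G \<circ> p) (\<tau> i) = t i)"
      using p(1) t(3) by (intro exists_mono_level_times) auto
    then obtain \<tau> where \<tau>_mono: "\<forall>i<n. \<tau> i \<le> \<tau> (Suc i)"
      and \<tau>_levels: "\<forall>i\<le>n. \<tau> i \<in> {c..d} \<and> (G \<circ> p) (\<tau> i) = t i"
      by blast
    have \<tau>: "\<tau> i \<in> {c..d}" "G (p (\<tau> i)) = t i" if "i \<le> n" for i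
      using \<tau>_levels that by simp_all
    have close: "dist (p (\<tau> i)) (g (t i)) < r" if "i \<le> n" for i
    proof -
      have "p (\<tau> i) \<in> p ` {c..d}" using \<tau>(1)[OF that] by (rule imageI)
      then have "p (\<tau> i) \<in> sausage (g ` {a..b}) \<epsilon>0" using p(4) \<Gamma>'(2) by (meson subsetD)
      then have "infdist (p (\<tau> i)) (g ` {a..b}) \<le> \<epsilon>0" by (simp add: sausage_def)
      then show ?thesis using near \<tau>(2)[OF that] by metis
    qed
    have "(\<Sum>i<n. dist (g (t (Suc i))) (g (t i))) - 2 * real n * r \<le> (\<Sum>i<n. dist (p (\<tau> (Suc i))) (p (\<tau> i)))"
      using sum_dist_le_perturbed[of n "\<lambda>i. p (\<tau> i)" "\<lambda>i. g (t i)" r] close by simp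
    then have "ennreal ((\<Sum>i<n. dist (g (t (Suc i))) (g (t i))) - 2 * real n * r)
        \<le> ennreal (\<Sum>i<n. dist (p (\<tau> (Suc i))) (p (\<tau> i)))" by (rule ennreal_leI)
    also have "\<dots> \<le> hausdorff1 (p ` {c..d})"
      using \<tau>(1)[of 0] \<tau>(1)[of n] by (intro polygon_le_hausdorff1[OF p(2,3) \<tau>_mono]) auto
    also have "\<dots> \<le> hausdorff1 \<Gamma>'" using p(4) by (rule hausdorff1_mono)
    finally show ?thesis .
  qed
  show thesis using \<open>0 < \<epsilon>0\<close> bound by (rule that)
qed

lemma eventually_polygon_le_Lfun:
  fixes g :: "real \<Rightarrow> 'a::euclidean_space"
  assumes "a < b" and cont: "continuous_on {a..b} g" and inj: "inj_on g {a..b}"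
    and t: "t 0 = a" "t n = b" "\<forall>i<n. t i \<le> t (Suc i)" and "0 < e"
  shows "eventually (\<lambda>\<epsilon>. ennreal ((\<Sum>i<n. dist (g (t (Suc i))) (g (t i))) - e)
      \<le> Lfun (g ` {a..b}) \<epsilon> (g a) (g b)) (at_right 0)"
proof -
  define r where "r = e / (2 * n + 1)"
  have "0 < r" using \<open>0 < e\<close> by (simp add: r_def)
  have "2 * real n * r \<le> e" using \<open>0 < e\<close> by (simp add: r_def field_simps)
  then have less: "ennreal ((\<Sum>i<n. dist (g (t (Suc i))) (g (t i))) - e)
      \<le> ennreal ((\<Sum>i<n. dist (g (t (Suc i))) (g (t i))) - 2 * real n * r)"
    by (intro ennreal_leI) simp
  obtain \<epsilon>0 where "0 < \<epsilon>0" and bound: "\<And>\<Gamma>'. simple_curve \<Gamma>' \<Longrightarrow> \<Gamma>' \<subseteq> sausage (g ` {a..b}) \<epsilon>0 \<Longrightarrow>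
      g a \<in> \<Gamma>' \<Longrightarrow> g b \<in> \<Gamma>' \<Longrightarrow>
      ennreal ((\<Sum>i<n. dist (g (t (Suc i))) (g (t i))) - 2 * real n * r) \<le> hausdorff1 \<Gamma>'"
    by (rule polygon_le_hausdorff1_near_arc[OF assms(1-6) \<open>0 < r\<close>]) blast
  have "ennreal ((\<Sum>i<n. dist (g (t (Suc i))) (g (t i))) - e) \<le> Lfun (g ` {a..b}) \<epsilon> (g a) (g b)"
    if "\<epsilon> < \<epsilon>0" for \<epsilon>
    unfolding Lfun_def
  proof (rule INF_greatest)
    fix \<Gamma>' assume "\<Gamma>' \<in> {\<Gamma>'. simple_curve \<Gamma>' \<and> rectifiable_curve \<Gamma>' \<and>
      \<Gamma>' \<subseteq> sausage (g ` {a..b}) \<epsilon> \<and> g a \<in> \<Gamma>' \<and> g b \<in> \<Gamma>'}"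
    then have "simple_curve \<Gamma>'" "\<Gamma>' \<subseteq> sausage (g ` {a..b}) \<epsilon>0" "g a \<in> \<Gamma>'" "g b \<in> \<Gamma>'"
      using sausage_mono[of \<epsilon> \<epsilon>0] that by auto
    then show "ennreal ((\<Sum>i<n. dist (g (t (Suc i))) (g (t i))) - e) \<le> hausdorff1 \<Gamma>'"
      using less bound by (meson order_trans)
  qed
  then show ?thesis
    unfolding eventually_at_right_field using \<open>0 < \<epsilon>0\<close> by blast
qed

lemma eventually_less_Lfun:
  fixes g :: "real \<Rightarrow> 'a::euclidean_space"
  assumes "a < b" and cont: "continuous_on {a..b} g" and inj: "inj_on g {a..b}"
    and "y < hausdorff1 (g ` {a..b})"
  shows "eventually (\<lambda>\<epsilon>. y < Lfun (g ` {a..b}) \<epsilon> (g a) (g b)) (at_right 0)"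
proof -
  have "y < param_length a b g"
    using assms(4) hausdorff1_le_param_length[OF \<open>a < b\<close> cont] by (rule less_le_trans)
  then obtain x where x: "x \<in> {(n, t). t 0 = a \<and> t n = b \<and> (\<forall>i<n. t i \<le> t (Suc i))}"
    and "y < (case x of (n, t) \<Rightarrow> \<Sum>i<n. ennreal (dist (g (t (Suc i))) (g (t i))))"
    unfolding param_length_def less_SUP_iff by blast
  moreover obtain n t where "x = (n, t)" and t: "t 0 = a" "t n = b" "\<forall>i<n. t i \<le> t (Suc i)"
    using x by blast
  moreover define C where "C = (\<Sum>i<n. dist (g (t (Suc i))) (g (t i)))"
  ultimately have "y < ennreal C" by (simp add: sum_ennreal)
  then have "y \<noteq> \<infinity>" by auto
  then obtain yr where yr: "y = ennreal yr" "0 \<le> yr" by (cases y) auto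
  then have "yr < C" using \<open>y < ennreal C\<close> by (simp add: ennreal_less_iff)
  define e where "e = (C - yr) / 2"
  have "0 < e" "yr < C - e" using \<open>yr < C\<close> by (simp_all add: e_def field_simps)
  then have "y < ennreal (C - e)" using yr by (simp add: ennreal_lessI)
  from eventually_polygon_le_Lfun[OF \<open>a < b\<close> cont inj t \<open>0 < e\<close>] show ?thesis
  proof (rule eventually_mono)
    fix \<epsilon> assume "ennreal ((\<Sum>i<n. dist (g (t (Suc i))) (g (t i))) - e) \<le> Lfun (g ` {a..b}) \<epsilon> (g a) (g b)"
    then show "y < Lfun (g ` {a..b}) \<epsilon> (g a) (g b)"
      using order.strict_trans2[OF \<open>y < ennreal (C - e)\<close>] by (simp add: C_def)
  qed
qed

lemma tendsto_at_right_0_ennrealI: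
  fixes F :: "real \<Rightarrow> ennreal"
  assumes lower: "\<And>y. y < L \<Longrightarrow> eventually (\<lambda>\<epsilon>. y < F \<epsilon>) (at_right 0)"
    and upper: "\<And>\<epsilon>. 0 < \<epsilon> \<Longrightarrow> F \<epsilon> \<le> L + ennreal (c * \<epsilon>)"
  shows "(F \<longlongrightarrow> L) (at_right 0)"
proof (rule order_tendstoI)
  fix y assume "L < y"
  have "((\<lambda>\<epsilon>. L + ennreal (c * \<epsilon>)) \<longlongrightarrow> L + ennreal (c * 0)) (at_right 0)"
    by (intro tendsto_intros)
  then have "eventually (\<lambda>\<epsilon>. L + ennreal (c * \<epsilon>) < y) (at_right 0)"
    using \<open>L < y\<close> by (simp add: order_tendstoD(2))
  then show "eventually (\<lambda>\<epsilon>. F \<epsilon> < y) (at_right 0)"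
    using eventually_at_right_less[of 0] by eventually_elim (use upper in \<open>auto intro: le_less_trans\<close>)
qed (rule lower)

theorem lemma4p9:
  fixes \<Gamma> :: "'a::euclidean_space set"
  assumes "simple_curve \<Gamma>" and "rectifiable_curve \<Gamma>"
  shows "((\<lambda>\<epsilon>. SUP p \<in> sausage \<Gamma> \<epsilon> \<times> sausage \<Gamma> \<epsilon>. Lfun \<Gamma> \<epsilon> (fst p) (snd p))
           \<longlongrightarrow> hausdorff1 \<Gamma>) (at_right 0)"
proof -
  obtain a b and g :: "real \<Rightarrow> 'a" where "a < b" and cont: "continuous_on {a..b} g"
    and inj: "inj_on g {a..b}" and \<Gamma>: "\<Gamma> = g ` {a..b}"
    using assms(1) unfolding simple_curve_def by blast
  have "compact \<Gamma>" unfolding \<Gamma> using cont compact_Icc by (rule compact_continuous_image)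
  have "path_connected \<Gamma>" unfolding \<Gamma> using cont by (intro path_connected_continuous_image) auto
  have ends: "g a \<in> \<Gamma>" "g b \<in> \<Gamma>" "g a \<noteq> g b"
    using \<open>a < b\<close> inj by (auto simp: \<Gamma> dest: inj_onD)
  show ?thesis
  proof (rule tendsto_at_right_0_ennrealI)
    fix y assume "y < hausdorff1 \<Gamma>"
    then have "eventually (\<lambda>\<epsilon>. y < Lfun \<Gamma> \<epsilon> (g a) (g b)) (at_right 0)"
      unfolding \<Gamma> by (rule eventually_less_Lfun[OF \<open>a < b\<close> cont inj])
    then show "eventually (\<lambda>\<epsilon>. y < (SUP p \<in> sausage \<Gamma> \<epsilon> \<times> sausage \<Gamma> \<epsilon>. Lfun \<Gamma> \<epsilon> (fst p) (snd p))) (at_right 0)"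
      using eventually_at_right_less[of 0]
    proof eventually_elim
      case (elim \<epsilon>)
      then have "(g a, g b) \<in> sausage \<Gamma> \<epsilon> \<times> sausage \<Gamma> \<epsilon>" using ends subset_sausage[of \<epsilon> \<Gamma>] by auto
      then have "Lfun \<Gamma> \<epsilon> (g a) (g b) \<le> (SUP p \<in> sausage \<Gamma> \<epsilon> \<times> sausage \<Gamma> \<epsilon>. Lfun \<Gamma> \<epsilon> (fst p) (snd p))"
        by (rule SUP_upper2) simp
      with elim(1) show ?case by (rule order.strict_trans2)
    qed
  qed (rule SUP_Lfun_le_hausdorff1_add[OF \<open>compact \<Gamma>\<close> \<open>path_connected \<Gamma>\<close>
        rectifiable_curve_hausdorff1_finite[OF assms(2)] ends])
qed

end
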